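(* Let $V$ be a finite set with weights $\pi:V\to\mathbb{R}_+$, $\pi(V)=1$, and let $v_i\in\mathbb{R}^n$, $i\in V$, satisfy $\sum_{i<j}\pi(i)\pi(j)\|v_i-v_j\|^2=1$. Then one of the following holds: (i) (large core) there is a vector $v$ with $\pi\big(\{i:\|v_i-v\|\le\frac{1}{2\sqrt{10}}\}\big)\ge 1/4$; (ii) (well spread) there is a vector $w$ and a constant $c>0$ such that, setting $u_i=c(v_i-w)$, there is a subset $U\subseteq V$ with $\pi(U)\gtrsim1$, $\|u_i\|\le1$ for all $i\in U$, and $\sum_{i,j\in U}\pi(i)\pi(j)\|u_i-u_j\|^2\gtrsim1$.
   Context: $\pi(A)=\sum_{i\in A}\pi(i)$; $\gtrsim$ hides absolute positive constants. *)

theory Defs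
  imports Complex_Main
begin

text \<open>Euclidean norm on R^n, with vectors represented as functions nat => real
  of which only the coordinates 0..n-1 are relevant.\<close>
definition enorm :: "nat \<Rightarrow> (nat \<Rightarrow> real) \<Rightarrow> real" where
  "enorm n x = sqrt (\<Sum>k<n. (x k)\<^sup>2)"

end

theory Submission
  imports Defs
begin

(*
  Since sum_i pi_i (sum_j pi_j |v_i - v_j|^2) = 2, some centre v_i0 has weighted mean
  squared distance at most 2 to the other points, and by Markov's inequality the ball U
  of radius 2 around it has mass at least 1/2. If no ball of radius r = 1/(2 sqrt 10)
  has mass 1/4, every point of U sees mass at least 1/4 of U farther away than r, so
  sum_{i,j in U} pi_i pi_j |v_i - v_j|^2 >= (1/2) (1/4) r^2 = 1/320. Rescaling by 1/2
  around v_i0 puts U into the unit ball at the cost of a factor 1/4.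
*)

lemma enorm_scale: "enorm n (\<lambda>k. c * x k) = \<bar>c\<bar> * enorm n x"
  unfolding enorm_def
  by (simp add: power_mult_distrib sum_distrib_left[symmetric] real_sqrt_mult)

lemma enorm_diff_commute: "enorm n (\<lambda>k. a k - b k) = enorm n (\<lambda>k. b k - a k)"
  unfolding enorm_def by (simp add: power2_commute)

lemma enorm_zero: "enorm n (\<lambda>k. 0) = 0"
  unfolding enorm_def by simp

lemma enorm_scaled_shift_diff:
  "enorm n (\<lambda>k. c * (a k - w k) - c * (b k - w k)) = \<bar>c\<bar> * enorm n (\<lambda>k. a k - b k)"
proof -
  have "(\<lambda>k. c * (a k - w k) - c * (b k - w k)) = (\<lambda>k. c * (a k - b k))"
    by (simp add: algebra_simps)
  then show ?thesis by (simp add: enorm_scale)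
qed

lemma sum_sum_enorm_scaled_shift_diff:
  "(\<Sum>i\<in>U. \<Sum>j\<in>U. \<pi> i * \<pi> j * (enorm n (\<lambda>k. c * (v i k - w k) - c * (v j k - w k)))\<^sup>2) =
    c\<^sup>2 * (\<Sum>i\<in>U. \<Sum>j\<in>U. \<pi> i * \<pi> j * (enorm n (\<lambda>k. v i k - v j k))\<^sup>2)"
  by (simp add: enorm_scaled_shift_diff power_mult_distrib sum_distrib_left mult_ac)

lemma sum_sum_eq_double_sum_less:
  fixes g :: "'a::linorder \<Rightarrow> 'a \<Rightarrow> 'b::comm_semiring_1"
  assumes "finite V" and sym: "\<And>i j. g i j = g j i" and diag: "\<And>i. g i i = 0"
  shows "(\<Sum>i\<in>V. \<Sum>j\<in>V. g i j) = 2 * (\<Sum>i\<in>V. \<Sum>j\<in>{j\<in>V. i < j}. g i j)"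
proof -
  have row: "(\<Sum>j\<in>V. g i j) = (\<Sum>j\<in>{j\<in>V. i < j}. g i j) + (\<Sum>j\<in>{j\<in>V. j < i}. g i j)"
    for i
  proof -
    have "(\<Sum>j\<in>V. g i j) = (\<Sum>j\<in>{j\<in>V. j \<noteq> i}. g i j)"
      using assms(1) diag by (intro sum.mono_neutral_right) auto
    also have "{j\<in>V. j \<noteq> i} = {j\<in>V. i < j} \<union> {j\<in>V. j < i}"
      by auto
    also have "(\<Sum>j\<in>\<dots>. g i j) = (\<Sum>j\<in>{j\<in>V. i < j}. g i j) + (\<Sum>j\<in>{j\<in>V. j < i}. g i j)"
      using assms(1) by (intro sum.union_disjoint) auto
    finally show ?thesis .
  qed
  have "(\<Sum>i\<in>V. \<Sum>j\<in>{j\<in>V. j < i}. g i j) = (\<Sum>j\<in>V. \<Sum>i\<in>{i\<in>V. j < i}. g i j)"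
    using assms(1) by (intro sum.swap_restrict)
  also have "\<dots> = (\<Sum>i\<in>V. \<Sum>j\<in>{j\<in>V. i < j}. g i j)"
    by (simp add: sym)
  finally show ?thesis
    by (simp add: row sum.distrib mult_2)
qed

lemma exists_le_weighted_mean:
  fixes f \<pi> :: "'a \<Rightarrow> real"
  assumes "finite V" "\<forall>i\<in>V. \<pi> i \<ge> 0" "(\<Sum>i\<in>V. \<pi> i) = 1"
  shows "\<exists>i\<in>V. f i \<le> (\<Sum>i\<in>V. \<pi> i * f i)"
proof -
  have "V \<noteq> {}"
    using assms(3) by auto
  then have "Min (f ` V) \<in> f ` V"
    using assms(1) by simp
  then obtain i0 where "i0 \<in> V" and "f i0 = Min (f ` V)"
    by auto
  then have min: "\<forall>i\<in>V. f i0 \<le> f i"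
    using assms(1) by simp
  have "f i0 = (\<Sum>i\<in>V. \<pi> i * f i0)"
    using assms(3) by (simp add: sum_distrib_right[symmetric])
  also have "\<dots> \<le> (\<Sum>i\<in>V. \<pi> i * f i)"
    using assms(2) min by (intro sum_mono mult_left_mono) auto
  finally show ?thesis
    using \<open>i0 \<in> V\<close> by blast
qed

lemma weighted_markov:
  fixes g \<pi> :: "'a \<Rightarrow> real"
  assumes "finite A" "\<forall>j\<in>A. \<pi> j \<ge> 0" "\<forall>j\<in>A. g j \<ge> 0" "\<forall>j\<in>A. P j \<longrightarrow> t \<le> g j"
  shows "t * (\<Sum>j\<in>{j\<in>A. P j}. \<pi> j) \<le> (\<Sum>j\<in>A. \<pi> j * g j)"
proof -
  have "t * (\<Sum>j\<in>{j\<in>A. P j}. \<pi> j) = (\<Sum>j\<in>{j\<in>A. P j}. \<pi> j * t)"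
    by (simp add: sum_distrib_left mult.commute)
  also have "\<dots> \<le> (\<Sum>j\<in>{j\<in>A. P j}. \<pi> j * g j)"
    using assms(2,4) by (intro sum_mono mult_left_mono) auto
  also have "\<dots> \<le> (\<Sum>j\<in>A. \<pi> j * g j)"
    using assms(1-3) by (intro sum_mono2) auto
  finally show ?thesis .
qed

lemma sum_filter_le_eq_diff_gt:
  fixes g :: "'a \<Rightarrow> real" and f :: "'a \<Rightarrow> 'b::ab_group_add"
  assumes "finite A"
  shows "(\<Sum>j\<in>{j\<in>A. g j \<le> R}. f j) = (\<Sum>j\<in>A. f j) - (\<Sum>j\<in>{j\<in>A. R < g j}. f j)"
proof -
  have "A = {j\<in>A. g j \<le> R} \<union> {j\<in>A. R < g j}"
    by auto
  then have "(\<Sum>j\<in>A. f j) = (\<Sum>j\<in>{j\<in>A. g j \<le> R}. f j) + (\<Sum>j\<in>{j\<in>A. R < g j}. f j)"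
    using assms by (subst sum.union_disjoint[symmetric]) auto
  then show ?thesis
    by (simp add: eq_diff_eq)
qed

lemma exists_heavy_ball:
  fixes d :: "'a \<Rightarrow> 'a \<Rightarrow> real"
  assumes "finite V" "\<forall>i\<in>V. \<pi> i \<ge> 0" "(\<Sum>i\<in>V. \<pi> i) = 1"
    and "(\<Sum>i\<in>V. \<Sum>j\<in>V. \<pi> i * \<pi> j * (d i j)\<^sup>2) \<le> D" and "R > 0"
  shows "\<exists>i\<in>V. 1 - D / R\<^sup>2 \<le> (\<Sum>j\<in>{j\<in>V. d i j \<le> R}. \<pi> j)"
proof -
  obtain i where "i \<in> V" and
    i: "(\<Sum>j\<in>V. \<pi> j * (d i j)\<^sup>2) \<le> (\<Sum>i\<in>V. \<pi> i * (\<Sum>j\<in>V. \<pi> j * (d i j)\<^sup>2))"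
    using exists_le_weighted_mean[OF assms(1-3), of "\<lambda>i. \<Sum>j\<in>V. \<pi> j * (d i j)\<^sup>2"] by blast
  have "\<forall>j\<in>V. R < d i j \<longrightarrow> R\<^sup>2 \<le> (d i j)\<^sup>2"
    using assms(5) by (auto intro!: power_mono)
  then have "R\<^sup>2 * (\<Sum>j\<in>{j\<in>V. R < d i j}. \<pi> j) \<le> (\<Sum>j\<in>V. \<pi> j * (d i j)\<^sup>2)"
    using assms(1,2) by (intro weighted_markov) auto
  also have "\<dots> \<le> D"
    using i assms(4) by (simp add: sum_distrib_left mult.assoc)
  finally have "(\<Sum>j\<in>{j\<in>V. R < d i j}. \<pi> j) \<le> D / R\<^sup>2"
    using assms(5) by (simp add: field_simps)
  then have "1 - D / R\<^sup>2 \<le> (\<Sum>j\<in>{j\<in>V. d i j \<le> R}. \<pi> j)"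
    using sum_filter_le_eq_diff_gt[OF assms(1), where g = "d i" and R = R and f = \<pi>] assms(3)
    by linarith
  then show ?thesis
    using \<open>i \<in> V\<close> by blast
qed

lemma double_sum_ge_if_spread:
  fixes d :: "'a \<Rightarrow> 'a \<Rightarrow> real"
  assumes "finite U" "\<forall>i\<in>U. \<pi> i \<ge> 0" "r \<ge> 0"
    and spread: "\<forall>i\<in>U. m \<le> (\<Sum>j\<in>{j\<in>U. r < d i j}. \<pi> j)"
  shows "(\<Sum>i\<in>U. \<pi> i) * m * r\<^sup>2 \<le> (\<Sum>i\<in>U. \<Sum>j\<in>U. \<pi> i * \<pi> j * (d i j)\<^sup>2)"
proof -
  have row: "m * r\<^sup>2 \<le> (\<Sum>j\<in>U. \<pi> j * (d i j)\<^sup>2)" if "i \<in> U" for i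
  proof -
    have far: "\<forall>j\<in>U. r < d i j \<longrightarrow> r\<^sup>2 \<le> (d i j)\<^sup>2"
      using assms(3) by (auto intro!: power_mono)
    have "m * r\<^sup>2 \<le> r\<^sup>2 * (\<Sum>j\<in>{j\<in>U. r < d i j}. \<pi> j)"
      using spread that by (metis mult.commute mult_right_mono zero_le_power2)
    also have "\<dots> \<le> (\<Sum>j\<in>U. \<pi> j * (d i j)\<^sup>2)"
      using assms(1,2) far by (intro weighted_markov) auto
    finally show ?thesis .
  qed
  have "(\<Sum>i\<in>U. \<pi> i) * m * r\<^sup>2 = (\<Sum>i\<in>U. \<pi> i * (m * r\<^sup>2))"
    by (simp add: sum_distrib_right mult.assoc)
  also have "\<dots> \<le> (\<Sum>i\<in>U. \<pi> i * (\<Sum>j\<in>U. \<pi> j * (d i j)\<^sup>2))"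
    using assms(2) row by (intro sum_mono mult_left_mono) auto
  finally show ?thesis
    by (simp add: sum_distrib_left mult.assoc)
qed

lemma spread_ball_if_no_core:
  fixes d :: "'a \<Rightarrow> 'a \<Rightarrow> real"
  assumes "finite V" "\<forall>i\<in>V. \<pi> i \<ge> 0" "(\<Sum>i\<in>V. \<pi> i) = 1"
    and "(\<Sum>i\<in>V. \<Sum>j\<in>V. \<pi> i * \<pi> j * (d i j)\<^sup>2) \<le> 2" and "r \<ge> 0"
    and no_core: "\<forall>i\<in>V. (\<Sum>j\<in>{j\<in>V. d i j \<le> r}. \<pi> j) \<le> 1/4"
  shows "\<exists>i0\<in>V. \<exists>U\<subseteq>V. (\<forall>j\<in>U. d i0 j \<le> 2) \<and> 1/2 \<le> (\<Sum>i\<in>U. \<pi> i) \<and>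
    r\<^sup>2 / 8 \<le> (\<Sum>i\<in>U. \<Sum>j\<in>U. \<pi> i * \<pi> j * (d i j)\<^sup>2)"
proof -
  obtain i0 where "i0 \<in> V" and heavy: "1/2 \<le> (\<Sum>j\<in>{j\<in>V. d i0 j \<le> 2}. \<pi> j)"
    using exists_heavy_ball[OF assms(1-4), of 2] by auto
  define U where "U = {j\<in>V. d i0 j \<le> 2}"
  have "finite U" "U \<subseteq> V" "\<forall>j\<in>U. d i0 j \<le> 2" "1/2 \<le> (\<Sum>i\<in>U. \<pi> i)"
    using assms(1) heavy by (auto simp: U_def)
  have "1/4 \<le> (\<Sum>j\<in>{j\<in>U. r < d i j}. \<pi> j)" if "i \<in> U" for i
  proof -
    have "(\<Sum>j\<in>{j\<in>U. d i j \<le> r}. \<pi> j) \<le> (\<Sum>j\<in>{j\<in>V. d i j \<le> r}. \<pi> j)"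
      using assms(1,2) \<open>U \<subseteq> V\<close> by (intro sum_mono2) auto
    also have "\<dots> \<le> 1/4"
      using no_core that \<open>U \<subseteq> V\<close> by blast
    finally show ?thesis
      using sum_filter_le_eq_diff_gt[OF \<open>finite U\<close>, where g = "d i" and R = r and f = \<pi>]
        \<open>1/2 \<le> (\<Sum>i\<in>U. \<pi> i)\<close> by linarith
  qed
  then have "(\<Sum>i\<in>U. \<pi> i) * (1/4) * r\<^sup>2 \<le> (\<Sum>i\<in>U. \<Sum>j\<in>U. \<pi> i * \<pi> j * (d i j)\<^sup>2)"
    using \<open>finite U\<close> \<open>U \<subseteq> V\<close> assms(2,5) by (intro double_sum_ge_if_spread) auto
  moreover have "1/2 * (1/4) * r\<^sup>2 \<le> (\<Sum>i\<in>U. \<pi> i) * (1/4) * r\<^sup>2"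
    using \<open>1/2 \<le> (\<Sum>i\<in>U. \<pi> i)\<close> by (intro mult_right_mono) auto
  ultimately have "r\<^sup>2 / 8 \<le> (\<Sum>i\<in>U. \<Sum>j\<in>U. \<pi> i * \<pi> j * (d i j)\<^sup>2)"
    by linarith
  then show ?thesis
    using \<open>i0 \<in> V\<close> \<open>U \<subseteq> V\<close> \<open>\<forall>j\<in>U. d i0 j \<le> 2\<close> \<open>1/2 \<le> (\<Sum>i\<in>U. \<pi> i)\<close> by blast
qed

lemma core_or_spread_enorm:
  fixes V :: "nat set" and \<pi> :: "nat \<Rightarrow> real" and v :: "nat \<Rightarrow> nat \<Rightarrow> real"
  assumes "finite V" "\<forall>i\<in>V. \<pi> i \<ge> 0" "(\<Sum>i\<in>V. \<pi> i) = 1"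
    and energy: "(\<Sum>i\<in>V. \<Sum>j\<in>{j\<in>V. i < j}. \<pi> i * \<pi> j * (enorm n (\<lambda>k. v i k - v j k))\<^sup>2) = 1"
  shows "(\<exists>x. (\<Sum>i\<in>{i\<in>V. enorm n (\<lambda>k. v i k - x k) \<le> 1 / (2 * sqrt 10)}. \<pi> i) \<ge> 1/4) \<or>
    (\<exists>w c U. c > 0 \<and> U \<subseteq> V \<and> (\<Sum>i\<in>U. \<pi> i) \<ge> 1/2 \<and>
      (\<forall>i\<in>U. enorm n (\<lambda>k. c * (v i k - w k)) \<le> 1) \<and>
      (\<Sum>i\<in>U. \<Sum>j\<in>U. \<pi> i * \<pi> j *
        (enorm n (\<lambda>k. c * (v i k - w k) - c * (v j k - w k)))\<^sup>2) \<ge> 1/1280)"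
proof (subst disj_commute, rule disjCI)
  define d where "d i j = enorm n (\<lambda>k. v i k - v j k)" for i j
  define r :: real where "r = 1 / (2 * sqrt 10)"
  have d_commute: "d i j = d j i" for i j
    unfolding d_def by (rule enorm_diff_commute)
  assume "\<not> (\<exists>x. (\<Sum>i\<in>{i\<in>V. enorm n (\<lambda>k. v i k - x k) \<le> 1 / (2 * sqrt 10)}. \<pi> i) \<ge> 1/4)"
  then have no_core: "\<forall>i\<in>V. (\<Sum>j\<in>{j\<in>V. d i j \<le> r}. \<pi> j) \<le> 1/4"
    unfolding d_def r_def by (subst enorm_diff_commute) (meson not_le less_imp_le)
  have "(\<Sum>i\<in>V. \<Sum>j\<in>V. \<pi> i * \<pi> j * (d i j)\<^sup>2) =
      2 * (\<Sum>i\<in>V. \<Sum>j\<in>{j\<in>V. i < j}. \<pi> i * \<pi> j * (d i j)\<^sup>2)"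
    using assms(1) by (rule sum_sum_eq_double_sum_less)
      (metis d_commute mult.commute, simp add: d_def enorm_zero)
  then have "(\<Sum>i\<in>V. \<Sum>j\<in>V. \<pi> i * \<pi> j * (d i j)\<^sup>2) \<le> 2"
    using energy by (simp add: d_def)
  then obtain i0 U where "U \<subseteq> V" and near: "\<forall>j\<in>U. d i0 j \<le> 2" and heavy: "1/2 \<le> (\<Sum>i\<in>U. \<pi> i)"
    and spread: "r\<^sup>2 / 8 \<le> (\<Sum>i\<in>U. \<Sum>j\<in>U. \<pi> i * \<pi> j * (d i j)\<^sup>2)"
    using spread_ball_if_no_core[OF assms(1-3) _ _ no_core] by (auto simp: r_def)
  define c :: real where "c = 1/2"
  have "c > 0" "c\<^sup>2 = 1/4" "r\<^sup>2 = 1/40"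
    by (simp_all add: r_def c_def power_divide power_mult_distrib)
  then have "1/1280 \<le> (\<Sum>i\<in>U. \<Sum>j\<in>U. \<pi> i * \<pi> j *
      (enorm n (\<lambda>k. c * (v i k - v i0 k) - c * (v j k - v i0 k)))\<^sup>2)"
    using spread unfolding sum_sum_enorm_scaled_shift_diff d_def by (simp only:)
  moreover have "\<forall>i\<in>U. enorm n (\<lambda>k. c * (v i k - v i0 k)) \<le> 1"
  proof
    fix i
    assume "i \<in> U"
    have "enorm n (\<lambda>k. c * (v i k - v i0 k)) = c * d i0 i"
      unfolding d_def c_def by (subst enorm_scale) (simp add: enorm_diff_commute[of n "v i"])
    also have "\<dots> \<le> 1"
      using near \<open>i \<in> U\<close> by (simp add: c_def)
    finally show "enorm n (\<lambda>k. c * (v i k - v i0 k)) \<le> 1" .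
  qed
  ultimately show "\<exists>w c U. c > 0 \<and> U \<subseteq> V \<and> (\<Sum>i\<in>U. \<pi> i) \<ge> 1/2 \<and>
      (\<forall>i\<in>U. enorm n (\<lambda>k. c * (v i k - w k)) \<le> 1) \<and>
      (\<Sum>i\<in>U. \<Sum>j\<in>U. \<pi> i * \<pi> j *
        (enorm n (\<lambda>k. c * (v i k - w k) - c * (v j k - w k)))\<^sup>2) \<ge> 1/1280"
    using \<open>c > 0\<close> \<open>U \<subseteq> V\<close> heavy by (intro exI[of _ "v i0"] exI[of _ c] exI[of _ U] conjI)
qed

theorem mainTheorem11:
  shows "\<exists>C1>0. \<exists>C2>0. \<forall>(V::nat set) (\<pi>::nat \<Rightarrow> real) (n::nat) (v::nat \<Rightarrow> nat \<Rightarrow> real).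
    finite V \<and> (\<forall>i\<in>V. \<pi> i \<ge> 0) \<and> (\<Sum>i\<in>V. \<pi> i) = 1 \<and>
    (\<Sum>i\<in>V. \<Sum>j\<in>{j\<in>V. i < j}. \<pi> i * \<pi> j * (enorm n (\<lambda>k. v i k - v j k))\<^sup>2) = 1
    \<longrightarrow>
    (\<exists>x::nat \<Rightarrow> real.
        (\<Sum>i\<in>{i\<in>V. enorm n (\<lambda>k. v i k - x k) \<le> 1 / (2 * sqrt 10)}. \<pi> i) \<ge> 1/4)
    \<or>
    (\<exists>(w::nat \<Rightarrow> real) (c::real) (U::nat set).
        c > 0 \<and> U \<subseteq> V \<and> (\<Sum>i\<in>U. \<pi> i) \<ge> C1 \<and>
        (\<forall>i\<in>U. enorm n (\<lambda>k. c * (v i k - w k)) \<le> 1) \<and>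
        (\<Sum>i\<in>U. \<Sum>j\<in>U. \<pi> i * \<pi> j *
            (enorm n (\<lambda>k. c * (v i k - w k) - c * (v j k - w k)))\<^sup>2) \<ge> C2)"
  by (rule exI[of _ "1/2"], rule conjI, simp, rule exI[of _ "1/1280"], rule conjI, simp)
    (intro allI impI, elim conjE, rule core_or_spread_enorm)

end
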